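(* For any configuration $G$, if $G$ is feasible then the algorithm Classifier outputs "Yes" when executed with $G$ as input.
   Context: Model. A configuration is a finite simple undirected connected graph $G$ with $n$ nodes, each node $v$ tagged with a non-negative integer $t_v$ (wakeup tag); smallest tag $0$, span $\sigma$ = largest tag. Nodes are anonymous and communicate in synchronous global rounds. A node $v$ wakes up in the first global round $r\le t_v$ in which it receives a message, if any, and otherwise in global round $t_v$; its local clock is $0$ in its wakeup round, it acts from local round $1$, and nodes do not know the global clock. In each round a node transmits a message to all neighbours, listens, or terminates. A listening node receives $M$ if exactly one neighbour transmits ($M$), hears collision noise (distinct from silence and messages) if at least two neighbours transmit, and silence otherwise; a transmitting node hears nothing. A DRIP is a common function mapping a node's history (what it heard in each local round $0,\ldots,i-1$, including whether/by which message it was woken) to its action in local round $i\ge1$, with every node eventually terminating permanently; a decision function maps each node's final history to $\{0,1\}$; a dedicated leader election algorithm for $G$ is a DRIP plus decision function such that exactly one node of $G$ outputs $1$; $G$ is feasible if one exists. Algorithm Classifier (centralized, input $G$): maintains a partition of the nodes into classes $\mathrm{class}(v)\in\{1,\ldots,\mathit{numClasses}\}$, initially all in class $1$. One iteration: for each node $v$, its label $L_v$ is the set of triples obtained as follows: for each neighbour $w$ with $\mathrm{class}(w)\ne\mathrm{class}(v)$ or $t_w\ne t_v$ form the pair $(\mathrm{class}(w),\sigma+1+t_w-t_v)$; for each distinct pair $(a,b)$ so formed, $L_v$ contains $(a,b,1)$ if exactly one neighbour yields it and $(a,b,* )$ otherwise. Then the partition is refined: two nodes share a new class iff they shared a class before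 and have equal labels. Main loop: for $i=1,\ldots,\lceil n/2\rceil$: record $\mathit{old}=\mathit{numClasses}$; do one iteration; if some class has exactly one node, output "Yes" and stop; else if the number of classes equals $\mathit{old}$, output "No" and stop. *)

theory Defs
  imports Complex_Main
begin

text \<open>A configuration: vertex set V, edge relation E (symmetric, irreflexive, on V),
  wakeup tags t. The graph must be finite, nonempty, connected; the smallest tag is 0.\<close>

definition is_config :: "'v set \<Rightarrow> ('v \<Rightarrow> 'v \<Rightarrow> bool) \<Rightarrow> ('v \<Rightarrow> nat) \<Rightarrow> bool" where
  "is_config V E t \<longleftrightarrow>
     finite V \<and> V \<noteq> {} \<and>
     (\<forall>a b. E a b \<longrightarrow> a \<in> V \<and> b \<in> V) \<and>
     (\<forall>a b. E a b \<longrightarrow> E b a) \<and> (\<forall>a. \<not> E a a) \<and>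
     (\<forall>u\<in>V. \<forall>w\<in>V. E\<^sup>*\<^sup>* u w) \<and>
     (\<exists>v\<in>V. t v = 0)"

definition span :: "'v set \<Rightarrow> ('v \<Rightarrow> nat) \<Rightarrow> nat" where
  "span V t = Max (t ` V)"

text \<open>What a node hears in a round: silence, collision noise, a message, or (when it
  transmits itself) nothing.\<close>
datatype 'm obs = Silence | Noise | Msg 'm | Sent

datatype 'm act = Transmit 'm | Listen | Terminate

text \<open>Message transmitted by a node in the current round, given its history so far
  (None = not awake yet).  A terminated node's history stops growing, and its action stays
  Terminate.\<close>
definition tx_of :: "('m obs list \<Rightarrow> 'm act) \<Rightarrow> 'm obs list option \<Rightarrow> 'm option" where
  "tx_of A ho = (case ho of
      Some h \<Rightarrow> (case A h of Transmit m \<Rightarrow> Some m | _ \<Rightarrow> None)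
    | None \<Rightarrow> None)"

definition hear :: "'v set \<Rightarrow> ('v \<Rightarrow> 'v \<Rightarrow> bool) \<Rightarrow> ('v \<Rightarrow> 'm option) \<Rightarrow> 'v \<Rightarrow> 'm obs" where
  "hear V E tx v = (let T = {w \<in> V. E v w \<and> tx w \<noteq> None} in
     if T = {} then Silence
     else if card T = 1 then Msg (the (tx (the_elem T)))
     else Noise)"

text \<open>hist V E t A r v: the history of node v (what it heard in local rounds 0,1,...)
  at the end of global round r, or None if v is not yet awake.  The DRIP A maps a history
  of length i (local rounds 0..i-1) to the action of local round i.\<close>
fun hist :: "'v set \<Rightarrow> ('v \<Rightarrow> 'v \<Rightarrow> bool) \<Rightarrow> ('v \<Rightarrow> nat) \<Rightarrow> ('m obs list \<Rightarrow> 'm act)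
               \<Rightarrow> nat \<Rightarrow> 'v \<Rightarrow> 'm obs list option" where
  "hist V E t A 0 v = (if t v = 0 then Some [Silence] else None)"
| "hist V E t A (Suc r) v =
     (let ob = hear V E (\<lambda>w. tx_of A (hist V E t A r w)) v in
      case hist V E t A r v of
        Some h \<Rightarrow> (case A h of
                      Terminate \<Rightarrow> Some h
                    | Transmit m \<Rightarrow> Some (h @ [Sent])
                    | Listen \<Rightarrow> Some (h @ [ob]))
      | None \<Rightarrow> (if t v = Suc r \<or> (\<exists>m. ob = Msg m) then Some [ob] else None))"

definition terminates_with ::
  "'v set \<Rightarrow> ('v \<Rightarrow> 'v \<Rightarrow> bool) \<Rightarrow> ('v \<Rightarrow> nat) \<Rightarrow> ('m obs list \<Rightarrow> 'm act) \<Rightarrow> 'v \<Rightarrow> 'm obs list \<Rightarrow> bool" where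
  "terminates_with V E t A v h \<longleftrightarrow> (\<exists>r. hist V E t A r v = Some h) \<and> A h = Terminate"

text \<open>A dedicated leader election algorithm: DRIP A with decision function d (True = output 1).\<close>
definition dedicated_le ::
  "'v set \<Rightarrow> ('v \<Rightarrow> 'v \<Rightarrow> bool) \<Rightarrow> ('v \<Rightarrow> nat) \<Rightarrow> ('m obs list \<Rightarrow> 'm act) \<Rightarrow> ('m obs list \<Rightarrow> bool) \<Rightarrow> bool" where
  "dedicated_le V E t A d \<longleftrightarrow>
     (\<forall>v\<in>V. \<exists>h. terminates_with V E t A v h) \<and>
     (\<exists>!v. v \<in> V \<and> (\<exists>h. terminates_with V E t A v h \<and> d h))"

definition feasible :: "'m itself \<Rightarrow> 'v set \<Rightarrow> ('v \<Rightarrow> 'v \<Rightarrow> bool) \<Rightarrow> ('v \<Rightarrow> nat) \<Rightarrow> bool" where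
  "feasible _ V E t \<longleftrightarrow> (\<exists>(A :: 'm obs list \<Rightarrow> 'm act) d. dedicated_le V E t A d)"

text \<open>A partition is represented by mapping each node to its class (a set of nodes).
  Labels: triples (class, sigma+1+t_w-t_v, exactly-one?).\<close>
definition label :: "'v set \<Rightarrow> ('v \<Rightarrow> 'v \<Rightarrow> bool) \<Rightarrow> ('v \<Rightarrow> nat) \<Rightarrow> ('v \<Rightarrow> 'v set) \<Rightarrow> 'v
                      \<Rightarrow> ('v set \<times> int \<times> bool) set" where
  "label V E t c v =
    (let N = {w \<in> V. E v w \<and> (c w \<noteq> c v \<or> t w \<noteq> t v)};
         pr = (\<lambda>w. (c w, int (span V t) + 1 + int (t w) - int (t v)))
     in {(a, b, card {w \<in> N. pr w = (a, b)} = 1) | a b. (a, b) \<in> pr ` N})"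

definition refine :: "'v set \<Rightarrow> ('v \<Rightarrow> 'v \<Rightarrow> bool) \<Rightarrow> ('v \<Rightarrow> nat) \<Rightarrow> ('v \<Rightarrow> 'v set) \<Rightarrow> ('v \<Rightarrow> 'v set)" where
  "refine V E t c = (\<lambda>v. {u \<in> c v. label V E t c u = label V E t c v})"

definition num_classes :: "'v set \<Rightarrow> ('v \<Rightarrow> 'v set) \<Rightarrow> nat" where
  "num_classes V c = card (c ` V)"

definition has_singleton :: "'v set \<Rightarrow> ('v \<Rightarrow> 'v set) \<Rightarrow> bool" where
  "has_singleton V c \<longleftrightarrow> (\<exists>v\<in>V. card (c v) = 1)"

text \<open>Main loop with k remaining iterations; Some True = "Yes", Some False = "No",
  None = loop exhausted without output.\<close>
primrec classifier_loop :: "'v set \<Rightarrow> ('v \<Rightarrow> 'v \<Rightarrow> bool) \<Rightarrow> ('v \<Rightarrow> nat) \<Rightarrow> nat \<Rightarrow> ('v \<Rightarrow> 'v set) \<Rightarrow> bool option" where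
  "classifier_loop V E t 0 c = None"
| "classifier_loop V E t (Suc k) c =
     (let c' = refine V E t c in
      if has_singleton V c' then Some True
      else if num_classes V c' = num_classes V c then Some False
      else classifier_loop V E t k c')"

definition classifier :: "'v set \<Rightarrow> ('v \<Rightarrow> 'v \<Rightarrow> bool) \<Rightarrow> ('v \<Rightarrow> nat) \<Rightarrow> bool option" where
  "classifier V E t = classifier_loop V E t (nat \<lceil>real (card V) / 2\<rceil>) (\<lambda>_. V)"

end

theory Submission
  imports Defs
begin

(* If Classifier answers "No", the partition it has reached is stable: nodes of the same class
  have equal labels.  In a stable partition all nodes of a class have the same wakeup tag: the
  excess of t v over the least tag in the class of v never decreases along an edge (the
  class-minimal node has a neighbour of the same class and relative tag) and it vanishes at a
  node of tag 0, so by connectivity it vanishes everywhere.  Once tags are constant on classes,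
  a label records which classes occur among the neighbours in other classes and which of them
  occur exactly once; this determines what a node hears while its class is silent.  By induction
  on rounds all nodes of a class then have the same history under every DRIP, so a class with
  two or more nodes cannot contain the unique leader: a stable partition of a feasible
  configuration has a singleton class.  Classifier cannot run out of iterations either: every
  iteration that does not stop adds a class, and a partition without singleton classes has at
  most n/2 classes. *)

lemma filter_eq_singleton_fibre:
  assumes "{a \<in> A. f a \<in> S} = {a\<^sub>0}"
  shows "S \<inter> f ` A = {f a\<^sub>0}" and "{a \<in> A. f a = f a\<^sub>0} = {a\<^sub>0}"
proof -
  have mem: "a \<in> A \<and> f a \<in> S \<longleftrightarrow> a = a\<^sub>0" for a
    using assms unfolding set_eq_iff by simp
  show "S \<inter> f ` A = {f a\<^sub>0}"
  proof
    show "S \<inter> f ` A \<subseteq> {f a\<^sub>0}"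
    proof
      fix y assume "y \<in> S \<inter> f ` A"
      then obtain a where "a \<in> A" "f a \<in> S" "y = f a" by blast
      then show "y \<in> {f a\<^sub>0}" using mem[of a] by simp
    qed
    show "{f a\<^sub>0} \<subseteq> S \<inter> f ` A" using mem[of a\<^sub>0] by blast
  qed
  show "{a \<in> A. f a = f a\<^sub>0} = {a\<^sub>0}"
  proof
    show "{a \<in> A. f a = f a\<^sub>0} \<subseteq> {a\<^sub>0}"
    proof
      fix a assume "a \<in> {a \<in> A. f a = f a\<^sub>0}"
      then have "a \<in> A" "f a \<in> S" using mem[of a\<^sub>0] by simp_all
      then show "a \<in> {a\<^sub>0}" using mem[of a] by simp
    qed
    show "{a\<^sub>0} \<subseteq> {a \<in> A. f a = f a\<^sub>0}" using mem[of a\<^sub>0] by simp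
  qed
qed

lemma card_filter_image_eq_1_iff:
  "card {a \<in> A. f a \<in> S} = 1 \<longleftrightarrow> (\<exists>X. S \<inter> f ` A = {X} \<and> card {a \<in> A. f a = X} = 1)"
proof
  assume "card {a \<in> A. f a \<in> S} = 1"
  then obtain a where "{a \<in> A. f a \<in> S} = {a}" by (auto simp: card_1_singleton_iff)
  then show "\<exists>X. S \<inter> f ` A = {X} \<and> card {a \<in> A. f a = X} = 1"
    using filter_eq_singleton_fibre by fastforce
next
  assume "\<exists>X. S \<inter> f ` A = {X} \<and> card {a \<in> A. f a = X} = 1"
  then obtain X a where "S \<inter> f ` A = {X}" "{a \<in> A. f a = X} = {a}"
    by (auto simp: card_1_singleton_iff)
  then have "{a \<in> A. f a \<in> S} = {a}" by blast
  then show "card {a \<in> A. f a \<in> S} = 1" by simp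
qed

lemma filter_eq_empty_iff: "{a \<in> A. f a \<in> S} = {} \<longleftrightarrow> S \<inter> f ` A = {}"
  by blast

lemma the_elem_filter_mem:
  assumes "card {a \<in> A. P a} = 1"
  shows "the_elem {a \<in> A. P a} \<in> A"
proof -
  obtain x where x: "{a \<in> A. P a} = {x}" using assms by (auto simp: card_1_singleton_iff)
  then have "x \<in> {a \<in> A. P a}" by simp
  then have "x \<in> A" by simp
  then show ?thesis using x by simp
qed

lemma image_the_elem_filter:
  assumes "card {a \<in> A. f a \<in> S} = 1"
  shows "f (the_elem {a \<in> A. f a \<in> S}) = the_elem (S \<inter> f ` A)"
proof -
  obtain a where "{a \<in> A. f a \<in> S} = {a}" using assms by (auto simp: card_1_singleton_iff)
  then show ?thesis using filter_eq_singleton_fibre(1) by fastforce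
qed

lemma le_twice_nat_ceiling_half: "n \<le> 2 * nat \<lceil>real n / 2\<rceil>"
proof -
  have "real n / 2 \<le> of_int \<lceil>real n / 2\<rceil>" by (rule le_of_int_ceiling)
  then have "int n \<le> 2 * \<lceil>real n / 2\<rceil>" by linarith
  then show ?thesis by linarith
qed

definition partition_map :: "'v set \<Rightarrow> ('v \<Rightarrow> 'v set) \<Rightarrow> bool" where
  "partition_map V c \<longleftrightarrow> (\<forall>v\<in>V. c v \<subseteq> V \<and> (\<forall>u\<in>V. u \<in> c v \<longleftrightarrow> c u = c v))"

definition class_constant :: "'v set \<Rightarrow> ('v \<Rightarrow> 'v set) \<Rightarrow> ('v \<Rightarrow> 'a) \<Rightarrow> bool" where
  "class_constant V c f \<longleftrightarrow> (\<forall>u\<in>V. \<forall>v\<in>V. c u = c v \<longrightarrow> f u = f v)"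

lemma class_constantD:
  "class_constant V c f \<Longrightarrow> u \<in> V \<Longrightarrow> v \<in> V \<Longrightarrow> c u = c v \<Longrightarrow> f u = f v"
  unfolding class_constant_def by blast

lemma class_constant_comp: "class_constant V c f \<Longrightarrow> class_constant V c (\<lambda>x. g (f x))"
  unfolding class_constant_def by metis

lemma partition_map_const: "partition_map V (\<lambda>_. V)"
  by (simp add: partition_map_def)

lemma partition_map_self: "partition_map V c \<Longrightarrow> v \<in> V \<Longrightarrow> v \<in> c v"
  by (auto simp: partition_map_def)

lemma partition_map_subset: "partition_map V c \<Longrightarrow> v \<in> V \<Longrightarrow> c v \<subseteq> V"
  by (auto simp: partition_map_def)

lemma partition_map_class_eq: "partition_map V c \<Longrightarrow> v \<in> V \<Longrightarrow> u \<in> c v \<Longrightarrow> c u = c v"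
  by (auto simp: partition_map_def)

lemma refine_self: "partition_map V c \<Longrightarrow> v \<in> V \<Longrightarrow> v \<in> refine V E t c v"
  by (simp add: refine_def partition_map_self)

lemma refine_eq_iff:
  assumes "partition_map V c" "u \<in> V" "v \<in> V"
  shows "refine V E t c u = refine V E t c v \<longleftrightarrow>
    c u = c v \<and> label V E t c u = label V E t c v"
proof
  assume "refine V E t c u = refine V E t c v"
  then have "u \<in> c v" "label V E t c u = label V E t c v"
    using refine_self[OF assms(1,2)] unfolding refine_def by blast+
  then show "c u = c v \<and> label V E t c u = label V E t c v"
    using partition_map_class_eq[OF assms(1,3)] by blast
qed (simp add: refine_def)

lemma partition_map_refine:
  assumes "partition_map V c"
  shows "partition_map V (refine V E t c)"
  unfolding partition_map_def
proof (intro ballI conjI)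
  fix v u assume "v \<in> V" "u \<in> V"
  show "refine V E t c v \<subseteq> V"
    using partition_map_subset[OF assms \<open>v \<in> V\<close>] by (auto simp: refine_def)
  show "u \<in> refine V E t c v \<longleftrightarrow> refine V E t c u = refine V E t c v"
    using refine_eq_iff[OF assms \<open>u \<in> V\<close> \<open>v \<in> V\<close>] assms \<open>u \<in> V\<close> \<open>v \<in> V\<close>
    unfolding refine_def partition_map_def by blast
qed

lemma refine_eq_class_if_stable:
  assumes "partition_map V c" "class_constant V c (label V E t c)" "v \<in> V"
  shows "refine V E t c v = c v"
proof -
  have "label V E t c u = label V E t c v" if "u \<in> c v" for u
  proof -
    have "u \<in> V" using partition_map_subset[OF assms(1,3)] that by blast
    then show ?thesis
      using class_constantD[OF assms(2) _ assms(3) partition_map_class_eq[OF assms(1,3) that]] by simp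
  qed
  then show ?thesis
    unfolding refine_def by auto
qed

lemma class_of_some_refine:
  assumes "partition_map V c" "v \<in> V"
  shows "c (SOME x. x \<in> refine V E t c v) = c v"
proof -
  have "v \<in> refine V E t c v"
    using refine_self[OF assms] .
  then have "(SOME x. x \<in> refine V E t c v) \<in> c v"
    unfolding refine_def by (metis (no_types, lifting) mem_Collect_eq someI)
  then show ?thesis using partition_map_class_eq[OF assms] by simp
qed

lemma classes_image_refine:
  assumes "partition_map V c"
  shows "c ` V = (\<lambda>X. c (SOME x. x \<in> X)) ` refine V E t c ` V"
  using class_of_some_refine[OF assms] by (force simp: image_image)

lemma num_classes_le_refine:
  assumes "finite V" "partition_map V c"
  shows "num_classes V c \<le> num_classes V (refine V E t c)"
  unfolding num_classes_def classes_image_refine[OF assms(2), where E = E and t = t]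
  using assms(1) by (intro card_image_le finite_imageI)

lemma stable_if_num_classes_refine_eq:
  assumes "finite V" "partition_map V c"
    and "num_classes V (refine V E t c) = num_classes V c"
  shows "class_constant V c (label V E t c)"
  unfolding class_constant_def
proof (intro ballI impI)
  fix u v assume uv: "u \<in> V" "v \<in> V" "c u = c v"
  define rep where "rep X = c (SOME x. x \<in> X)" for X
  have "inj_on rep (refine V E t c ` V)"
    using assms classes_image_refine[OF assms(2)]
    by (simp add: eq_card_imp_inj_on num_classes_def rep_def)
  moreover have "rep (refine V E t c u) = rep (refine V E t c v)"
    using class_of_some_refine[OF assms(2)] uv by (simp add: rep_def)
  ultimately have "refine V E t c u = refine V E t c v"
    using uv by (auto dest: inj_onD)
  then show "label V E t c u = label V E t c v"
    using refine_eq_iff[OF assms(2) uv(1,2)] by blast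
qed

lemma twice_num_classes_le_card:
  assumes "finite V" "partition_map V c" "\<not> has_singleton V c"
  shows "2 * num_classes V c \<le> card V"
proof -
  have "\<Union>(c ` V) = V"
    using partition_map_self[OF assms(2)] partition_map_subset[OF assms(2)] by blast
  moreover have "card (\<Union>(c ` V)) = sum card (c ` V)"
  proof (rule card_Union_disjoint)
    show "pairwise disjnt (c ` V)"
      unfolding pairwise_def disjnt_def
      using partition_map_class_eq[OF assms(2)] by (metis disjoint_iff imageE)
    show "finite X" if "X \<in> c ` V" for X
      using that assms(1) partition_map_subset[OF assms(2)] finite_subset by blast
  qed
  moreover have "sum (\<lambda>_. 2) (c ` V) \<le> sum card (c ` V)"
  proof (rule sum_mono)
    fix X assume "X \<in> c ` V"
    then obtain v where v: "v \<in> V" "X = c v" by blast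
    have "X \<noteq> {}" using partition_map_self[OF assms(2) v(1)] v(2) by blast
    moreover have "finite X" using partition_map_subset[OF assms(2) v(1)] v(2) assms(1) finite_subset by blast
    moreover have "card X \<noteq> 1" using assms(3) v unfolding has_singleton_def by blast
    ultimately show "2 \<le> card X" by (metis One_nat_def card_0_eq less_2_cases not_less)
  qed
  ultimately show ?thesis by (simp add: num_classes_def)
qed

lemma ex_in_label_iff:
  "(\<exists>\<beta>. (X, b, \<beta>) \<in> label V E t c u) \<longleftrightarrow>
   (\<exists>w\<in>V. E u w \<and> (c w \<noteq> c u \<or> t w \<noteq> t u) \<and>
      c w = X \<and> int (span V t) + 1 + int (t w) - int (t u) = b)"
  unfolding label_def Let_def by blast

lemma stable_tag_offset_mono:
  assumes "finite V" "partition_map V c" "class_constant V c (label V E t c)"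
    and "u \<in> V" "w \<in> V" "E u w"
  shows "int (t u) - int (Min (t ` c u)) \<le> int (t w) - int (Min (t ` c w))"
proof (cases "c w = c u \<and> t w = t u")
  case True
  then show ?thesis by simp
next
  case False
  have fin: "finite (c x)" if "x \<in> V" for x
    using finite_subset[OF partition_map_subset[OF assms(2) that] assms(1)] .
  obtain u' where u': "u' \<in> c u" "t u' = Min (t ` c u)"
    using Min_in[of "t ` c u"] fin[OF assms(4)] partition_map_self[OF assms(2,4)] by fastforce
  have "u' \<in> V" using partition_map_subset[OF assms(2,4)] u'(1) by blast
  have "label V E t c u' = label V E t c u"
    using class_constantD[OF assms(3) \<open>u' \<in> V\<close> assms(4) partition_map_class_eq[OF assms(2,4) u'(1)]] .
  moreover have "\<exists>\<beta>. (c w, int (span V t) + 1 + int (t w) - int (t u), \<beta>) \<in> label V E t c u"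
    unfolding ex_in_label_iff using assms(5,6) False by blast
  ultimately have "\<exists>\<beta>. (c w, int (span V t) + 1 + int (t w) - int (t u), \<beta>) \<in> label V E t c u'"
    by simp
  then obtain w' where w': "w' \<in> V" "c w' = c w"
    and offset: "int (span V t) + 1 + int (t w') - int (t u') = int (span V t) + 1 + int (t w) - int (t u)"
    unfolding ex_in_label_iff by blast
  have "w' \<in> c w" using partition_map_self[OF assms(2) w'(1)] w'(2) by simp
  then have "Min (t ` c w) \<le> t w'" using fin[OF assms(5)] by simp
  then show ?thesis using offset u'(2) by linarith
qed

lemma stable_class_constant_tags:
  assumes cfg: "is_config V E t" and part: "partition_map V c"
    and stable: "class_constant V c (label V E t c)"
  shows "class_constant V c t"
proof -
  have fin: "finite V" and edges: "\<And>a b. E a b \<Longrightarrow> a \<in> V \<and> b \<in> V"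
    and conn: "\<forall>u\<in>V. \<forall>w\<in>V. E\<^sup>*\<^sup>* u w"
    using cfg unfolding is_config_def by auto
  obtain z where z: "z \<in> V" "t z = 0" using cfg unfolding is_config_def by blast
  define offset where "offset x = int (t x) - int (Min (t ` c x))" for x
  have offset_nonneg: "0 \<le> offset x" if "x \<in> V" for x
    using that fin partition_map_self[OF part] partition_map_subset[OF part] finite_subset
    unfolding offset_def by (metis Min_le finite_imageI image_eqI of_nat_le_iff diff_ge_0_iff_ge)
  have "offset x \<le> offset y" if "E\<^sup>*\<^sup>* x y" for x y
    using that
  proof (induction rule: rtranclp_induct)
    case (step y y')
    then show ?case
      using stable_tag_offset_mono[OF fin part stable] edges[OF step(2)] step(2)
      unfolding offset_def by fastforce
  qed simp
  moreover have "offset z \<le> 0" using offset_nonneg[OF z(1)] z(2) unfolding offset_def by simp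
  ultimately have "t x = Min (t ` c x)" if "x \<in> V" for x
    using offset_nonneg[OF that] conn that z(1) unfolding offset_def by fastforce
  then show ?thesis unfolding class_constant_def by metis
qed

definition foreign_neighbours :: "'v set \<Rightarrow> ('v \<Rightarrow> 'v \<Rightarrow> bool) \<Rightarrow> ('v \<Rightarrow> 'v set) \<Rightarrow> 'v \<Rightarrow> 'v set" where
  "foreign_neighbours V E c u = {w \<in> V. E u w \<and> c w \<noteq> c u}"

lemma label_if_class_constant_tags:
  assumes "class_constant V c t" "u \<in> V"
  shows "label V E t c u =
    (\<lambda>w. (c w, int (span V t) + 1 + int (t w) - int (t u),
          card {x \<in> foreign_neighbours V E c u. c x = c w} = 1)) ` foreign_neighbours V E c u"
proof -
  let ?F = "foreign_neighbours V E c u"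
  let ?pr = "\<lambda>w. (c w, int (span V t) + 1 + int (t w) - int (t u))"
  have neighbours: "{w \<in> V. E u w \<and> (c w \<noteq> c u \<or> t w \<noteq> t u)} = ?F"
    using class_constantD[OF assms(1) _ assms(2)] unfolding foreign_neighbours_def by blast
  have fibre: "{x \<in> ?F. ?pr x = ?pr w} = {x \<in> ?F. c x = c w}" if "w \<in> ?F" for w
    using class_constantD[OF assms(1)] that unfolding foreign_neighbours_def by auto
  have "label V E t c u = (\<lambda>w. (c w, snd (?pr w), card {x \<in> ?F. ?pr x = ?pr w} = 1)) ` ?F"
    unfolding label_def Let_def neighbours by force
  also have "\<dots> = (\<lambda>w. (c w, snd (?pr w), card {x \<in> ?F. c x = c w} = 1)) ` ?F"
    using fibre by (intro image_cong) simp_all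
  finally show ?thesis by simp
qed

lemma fst_label_if_class_constant_tags:
  assumes "class_constant V c t" "u \<in> V"
  shows "fst ` label V E t c u = c ` foreign_neighbours V E c u"
  by (simp add: label_if_class_constant_tags[OF assms] image_image)

lemma unique_label_if_class_constant_tags:
  assumes "class_constant V c t" "u \<in> V"
  shows "(\<exists>b. (X, b, True) \<in> label V E t c u) \<longleftrightarrow>
    card {w \<in> foreign_neighbours V E c u. c w = X} = 1"
proof
  assume "\<exists>b. (X, b, True) \<in> label V E t c u"
  then obtain w where "w \<in> foreign_neighbours V E c u" "c w = X"
    "card {x \<in> foreign_neighbours V E c u. c x = c w} = 1"
    unfolding label_if_class_constant_tags[OF assms] by auto
  then show "card {w \<in> foreign_neighbours V E c u. c w = X} = 1" by simp
next
  assume unique: "card {w \<in> foreign_neighbours V E c u. c w = X} = 1"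
  then obtain w where "{w \<in> foreign_neighbours V E c u. c w = X} = {w}"
    by (auto simp: card_1_singleton_iff)
  then have "w \<in> {w \<in> foreign_neighbours V E c u. c w = X}" by simp
  then show "\<exists>b. (X, b, True) \<in> label V E t c u"
    unfolding label_if_class_constant_tags[OF assms] using unique by force
qed

lemma transmitting_neighbours:
  assumes tx: "class_constant V c tx" and "x \<in> V" "tx x = None"
  shows "{w \<in> V. E x w \<and> tx w \<noteq> None} =
    {w \<in> foreign_neighbours V E c x. c w \<in> c ` {w \<in> V. tx w \<noteq> None}}"
proof (intro set_eqI iffI)
  fix w
  assume "w \<in> {w \<in> V. E x w \<and> tx w \<noteq> None}"
  then have "w \<in> V" "E x w" "tx w \<noteq> None" by simp_all
  moreover from this have "c w \<noteq> c x"
    using class_constantD[OF tx _ \<open>x \<in> V\<close>] \<open>tx x = None\<close> by metis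
  ultimately show "w \<in> {w \<in> foreign_neighbours V E c x. c w \<in> c ` {w \<in> V. tx w \<noteq> None}}"
    unfolding foreign_neighbours_def by simp
next
  fix w
  assume "w \<in> {w \<in> foreign_neighbours V E c x. c w \<in> c ` {w \<in> V. tx w \<noteq> None}}"
  then obtain w' where "w \<in> V" "E x w" "w' \<in> V" "c w' = c w" "tx w' \<noteq> None"
    unfolding foreign_neighbours_def by auto
  then show "w \<in> {w \<in> V. E x w \<and> tx w \<noteq> None}"
    using class_constantD[OF tx \<open>w' \<in> V\<close> \<open>w \<in> V\<close>] by simp
qed

lemma hear_eq_if_class_constant:
  assumes stable: "class_constant V c (label V E t c)" and tags: "class_constant V c t"
    and tx: "class_constant V c tx"
    and "u \<in> V" "v \<in> V" "c u = c v" "tx u = None"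
  shows "hear V E tx u = hear V E tx v"
proof -
  let ?F = "foreign_neighbours V E c"
  define S where "S = c ` {w \<in> V. tx w \<noteq> None}"
  have "tx v = None" using class_constantD[OF tx assms(4-6)] \<open>tx u = None\<close> by simp
  note transmitters = transmitting_neighbours[OF tx, folded S_def]
  have same_label: "label V E t c u = label V E t c v"
    by (rule class_constantD[OF stable assms(4-6)])
  have classes: "c ` ?F u = c ` ?F v"
    using fst_label_if_class_constant_tags[OF tags assms(4), of E]
      fst_label_if_class_constant_tags[OF tags assms(5), of E] same_label by simp
  have unique: "card {w \<in> ?F u. c w = X} = 1 \<longleftrightarrow> card {w \<in> ?F v. c w = X} = 1" for X
    using unique_label_if_class_constant_tags[OF tags assms(4), of X E]
      unique_label_if_class_constant_tags[OF tags assms(5), of X E] same_label by simp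
  have empty: "{w \<in> ?F u. c w \<in> S} = {} \<longleftrightarrow> {w \<in> ?F v. c w \<in> S} = {}"
    unfolding filter_eq_empty_iff classes ..
  have single: "card {w \<in> ?F u. c w \<in> S} = 1 \<longleftrightarrow> card {w \<in> ?F v. c w \<in> S} = 1"
    unfolding card_filter_image_eq_1_iff classes unique ..
  have message: "tx (the_elem {w \<in> ?F u. c w \<in> S}) = tx (the_elem {w \<in> ?F v. c w \<in> S})"
    if single_u: "card {w \<in> ?F u. c w \<in> S} = 1"
  proof (rule class_constantD[OF tx])
    have single_v: "card {w \<in> ?F v. c w \<in> S} = 1" using single_u single by simp
    have "c (the_elem {w \<in> ?F u. c w \<in> S}) = the_elem (S \<inter> c ` ?F u)"
      by (rule image_the_elem_filter[OF single_u])
    also have "\<dots> = c (the_elem {w \<in> ?F v. c w \<in> S})"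
      unfolding classes by (rule image_the_elem_filter[OF single_v, symmetric])
    finally show "c (the_elem {w \<in> ?F u. c w \<in> S}) = c (the_elem {w \<in> ?F v. c w \<in> S})" .
    have "?F x \<subseteq> V" for x unfolding foreign_neighbours_def by blast
    then show "the_elem {w \<in> ?F u. c w \<in> S} \<in> V" "the_elem {w \<in> ?F v. c w \<in> S} \<in> V"
      using the_elem_filter_mem[OF single_u] the_elem_filter_mem[OF single_v] by blast+
  qed
  show ?thesis
    unfolding hear_def Let_def transmitters[OF \<open>u \<in> V\<close> \<open>tx u = None\<close>]
      transmitters[OF \<open>v \<in> V\<close> \<open>tx v = None\<close>]
    using empty single message by simp
qed

lemma hist_class_constant:
  assumes stable: "class_constant V c (label V E t c)" and tags: "class_constant V c t"
  shows "class_constant V c (hist V E t A r)"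
proof (induction r)
  case 0
  show ?case
    unfolding class_constant_def
  proof (intro ballI impI)
    fix u v assume "u \<in> V" "v \<in> V" "c u = c v"
    then have "t u = t v" by (rule class_constantD[OF tags])
    then show "hist V E t A 0 u = hist V E t A 0 v" by simp
  qed
next
  case (Suc r)
  let ?tx = "\<lambda>w. tx_of A (hist V E t A r w)"
  have tx: "class_constant V c ?tx"
    using class_constant_comp[OF Suc.IH] .
  show ?case
    unfolding class_constant_def
  proof (intro ballI impI)
    fix u v assume uv: "u \<in> V" "v \<in> V" "c u = c v"
    have same: "hist V E t A r u = hist V E t A r v" "t u = t v"
      using class_constantD[OF Suc.IH uv] class_constantD[OF tags uv] by simp_all
    have hear: "hear V E ?tx u = hear V E ?tx v" if "?tx u = None"
      using hear_eq_if_class_constant[OF stable tags tx uv that] .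
    show "hist V E t A (Suc r) u = hist V E t A (Suc r) v"
    proof (cases "?tx u = None")
      case True
      then show ?thesis by (simp only: hist.simps(2) Let_def same hear[OF True])
    next
      case False
      then obtain h m where "hist V E t A r u = Some h" "A h = Transmit m"
        by (auto simp: tx_of_def split: option.splits act.splits)
      then show ?thesis using same(1) by (simp add: Let_def)
    qed
  qed
qed

lemma stable_without_singleton_not_dedicated_le:
  assumes cfg: "is_config V E t" and part: "partition_map V c"
    and stable: "class_constant V c (label V E t c)" and no_singleton: "\<not> has_singleton V c"
  shows "\<not> dedicated_le V E t A d"
proof
  assume le: "dedicated_le V E t A d"
  then obtain v h where v: "v \<in> V" "terminates_with V E t A v h" "d h"
    unfolding dedicated_le_def by blast
  have "c v \<noteq> {v}" using no_singleton v(1) unfolding has_singleton_def by force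
  then obtain w where w: "w \<in> c v" "w \<noteq> v" using partition_map_self[OF part v(1)] by blast
  have "w \<in> V" using partition_map_subset[OF part v(1)] w(1) by blast
  have "hist V E t A r w = hist V E t A r v" for r
    using class_constantD[OF hist_class_constant[OF stable stable_class_constant_tags[OF cfg part stable]]
        \<open>w \<in> V\<close> v(1) partition_map_class_eq[OF part v(1) w(1)]] .
  then have "terminates_with V E t A w h" using v(2) unfolding terminates_with_def by simp
  then show False
    using le v w(2) \<open>w \<in> V\<close> unfolding dedicated_le_def by blast
qed

lemma classifier_loop_Suc_progress:
  assumes cfg: "is_config V E t" and feasible: "feasible TYPE('m) V E t"
    and part: "partition_map V c"
  shows "classifier_loop V E t (Suc k) c = Some True \<or>
    (\<not> has_singleton V (refine V E t c) \<and> num_classes V c < num_classes V (refine V E t c) \<and>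
     classifier_loop V E t (Suc k) c = classifier_loop V E t k (refine V E t c))"
proof -
  have fin: "finite V" using cfg unfolding is_config_def by simp
  let ?c' = "refine V E t c"
  consider "has_singleton V ?c'"
    | "\<not> has_singleton V ?c'" "num_classes V ?c' = num_classes V c"
    | "\<not> has_singleton V ?c'" "num_classes V c < num_classes V ?c'"
    using num_classes_le_refine[OF fin part, of E t] by fastforce
  then show ?thesis
  proof cases
    case 2
    then have stable: "class_constant V c (label V E t c)"
      using stable_if_num_classes_refine_eq[OF fin part] by blast
    then have "\<not> has_singleton V c"
      using 2(1) refine_eq_class_if_stable[OF part stable] unfolding has_singleton_def by simp
    then have "\<not> dedicated_le V E t A d" for A :: "'m obs list \<Rightarrow> 'm act" and d
      using stable_without_singleton_not_dedicated_le[OF cfg part stable] by blast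
    then show ?thesis using feasible unfolding feasible_def by blast
  qed (simp_all add: Let_def)
qed

lemma classifier_loop_eq_Some_True:
  assumes cfg: "is_config V E t" and feasible: "feasible TYPE('m) V E t"
  shows "partition_map V c \<Longrightarrow> card V \<le> 2 * (num_classes V c + k) \<Longrightarrow>
    classifier_loop V E t (Suc k) c = Some True"
proof (induction k arbitrary: c)
  case 0
  have fin: "finite V" using cfg unfolding is_config_def by simp
  show ?case
    using classifier_loop_Suc_progress[OF cfg feasible 0(1), of 0]
      twice_num_classes_le_card[OF fin partition_map_refine[OF 0(1)]] 0(2) by fastforce
next
  case (Suc k)
  show ?case
    using classifier_loop_Suc_progress[OF cfg feasible Suc.prems(1), of "Suc k"]
      Suc.IH[OF partition_map_refine[OF Suc.prems(1)]] Suc.prems(2) by fastforce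
qed

theorem lemma12:
  fixes V :: "'v set" and E :: "'v \<Rightarrow> 'v \<Rightarrow> bool" and t :: "'v \<Rightarrow> nat"
  assumes "is_config V E t"
    and "feasible TYPE('m) V E t"
  shows "classifier V E t = Some True"
proof -
  have "finite V" "V \<noteq> {}" using assms(1) unfolding is_config_def by auto
  then have "card V > 0" by (simp add: card_gt_0_iff)
  define k where "k = nat \<lceil>real (card V) / 2\<rceil> - 1"
  have iterations: "nat \<lceil>real (card V) / 2\<rceil> = Suc k"
    using \<open>card V > 0\<close> unfolding k_def by linarith
  have "num_classes V (\<lambda>_. V) = 1"
    using \<open>V \<noteq> {}\<close> unfolding num_classes_def by (simp add: image_constant_conv)
  moreover have "card V \<le> 2 * Suc k"
    using le_twice_nat_ceiling_half[of "card V"] unfolding iterations .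
  ultimately show ?thesis
    unfolding classifier_def iterations
    using classifier_loop_eq_Some_True[OF assms partition_map_const] by simp
qed

end
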